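(* Let $H$ be a real Hilbert space and $\{C_\alpha\}_{\alpha\in\Omega}$ ($|\Omega|\ge2$) a family of closed convex subsets of $H$ with nonempty intersection $C=\bigcap_{\alpha\in\Omega}C_\alpha$. Let $\{t_n\}\subset[0,1]$ be such that there exist $\delta>0$ and $K\in\mathbb N$ with the property that for every $n\in\mathbb N$ at least one of $t_n,t_{n+1},\dots,t_{n+K}$ is greater than $\delta$. Then for every starting element $x_0\in H$, every sequence $\{x_n\}$ of remote projections onto $\{C_\alpha\}$ with weakness parameters $\{t_n\}$ converges weakly to some point of $C$.
   Context: $P_\alpha$ denotes the metric projection onto $C_\alpha$. A sequence of remote projections with weakness parameters $t_n\in[0,1]$ starting at $x_0$ is defined by $x_{n+1}=P_{\alpha(n)}x_n$, where $\alpha(n)\in\Omega$ is any index with $\mathrm{dist}(x_n,C_{\alpha(n)})\ge t_n\sup_{\alpha}\mathrm{dist}(x_n,C_\alpha)$; if $t_n=1$ for at least one $n$, it is additionally required that $\max_\alpha\mathrm{dist}(x,C_\alpha)$ is attained for every $x\in H$. *)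

theory Defs
  imports "HOL-Analysis.Analysis"
begin

text \<open>Same definition as the library's closest_point, which is restricted to heine_borel spaces.\<close>
definition metric_projection :: "'a::real_inner set \<Rightarrow> 'a \<Rightarrow> 'a" where
  "metric_projection S a = (SOME x. x \<in> S \<and> (\<forall>y\<in>S. dist a x \<le> dist a y))"

definition remote_projections ::
  "'i set \<Rightarrow> ('i \<Rightarrow> 'a::real_inner set) \<Rightarrow> (nat \<Rightarrow> real) \<Rightarrow> (nat \<Rightarrow> 'i) \<Rightarrow> (nat \<Rightarrow> 'a) \<Rightarrow> bool"
where
  "remote_projections \<Omega> C t \<alpha> x \<longleftrightarrow>
     (\<forall>n. \<alpha> n \<in> \<Omega>
        \<and> infdist (x n) (C (\<alpha> n)) \<ge> t n * (SUP \<beta>\<in>\<Omega>. infdist (x n) (C \<beta>))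
        \<and> x (Suc n) = metric_projection (C (\<alpha> n)) (x n))
   \<and> ((\<exists>n. t n = 1) \<longrightarrow>
        (\<forall>y. \<exists>\<beta>\<in>\<Omega>. \<forall>\<gamma>\<in>\<Omega>. infdist y (C \<gamma>) \<le> infdist y (C \<beta>)))"

definition weakly_converges :: "(nat \<Rightarrow> 'a::real_inner) \<Rightarrow> 'a \<Rightarrow> bool" where
  "weakly_converges x p \<longleftrightarrow> (\<forall>y. (\<lambda>n. x n \<bullet> y) \<longlonglongrightarrow> p \<bullet> y)"

end

theory Submission
  imports Defs
begin

text \<open>
  Each projection step satisfies the Pythagorean inequality
  \<open>dist(x(n+1), c)\<^sup>2 + dist(x n, x(n+1))\<^sup>2 \<le> dist(x n, c)\<^sup>2\<close> for every point \<open>c\<close>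
  of the intersection, so the sequence is Fejer monotone: its distances to the points of
  the intersection converge and its steps tend to zero. Within any \<open>K + 1\<close> consecutive
  steps there is one with weakness parameter above \<open>\<delta>\<close>, and that step is at least \<open>\<delta>\<close>
  times the largest distance to the sets \<open>C \<alpha>\<close>; as the steps are small, the distance
  of \<open>x n\<close> to each \<open>C \<alpha>\<close> tends to zero. Opial's argument concludes: weak cluster points
  lie in the intersection, and two of them \<open>p \<noteq> q\<close> are impossible since \<open>x n \<bullet> (q - p)\<close>
  converges. Instead of weak compactness we use that the closed convex hulls of the tails
  of a bounded sequence have a common point, which follows from the nearest-point
  property of Hilbert spaces.
\<close>

lemma parallelogram_law_midpoint:
  fixes a u v :: "'a::real_inner"
  shows "(dist u v)\<^sup>2 = 2 * (dist a u)\<^sup>2 + 2 * (dist a v)\<^sup>2 - 4 * (dist a (midpoint u v))\<^sup>2"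
  by (simp add: dist_norm midpoint_def power2_norm_eq_inner algebra_simps inner_commute)

lemma Cauchy_if_dist_le_tendsto_zero:
  fixes f :: "nat \<Rightarrow> 'a::metric_space"
  assumes le: "\<And>m n. m \<le> n \<Longrightarrow> dist (f m) (f n) \<le> b m" and b: "b \<longlonglongrightarrow> 0"
  shows "Cauchy f"
proof (rule CauchyI')
  fix e :: real assume "0 < e"
  then obtain M where "\<forall>m\<ge>M. b m < e"
    using b by (auto simp: order_tendsto_iff eventually_sequentially)
  then show "\<exists>M. \<forall>m\<ge>M. \<forall>n>m. dist (f m) (f n) < e"
    using le by (meson le_less_trans less_imp_le)
qed

lemma dist_sq_le_if_near_nearest:
  fixes S :: "'a::real_inner set"
  assumes "convex S" "u \<in> S" "v \<in> S" "dist a u \<le> r" "dist a v \<le> r"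
    and nearest: "\<And>y. y \<in> S \<Longrightarrow> d \<le> dist a y" and "0 \<le> d"
  shows "(dist u v)\<^sup>2 \<le> 4 * r\<^sup>2 - 4 * d\<^sup>2"
proof -
  have "midpoint u v \<in> S"
    using assms(1-3) midpoint_in_closed_segment by (meson convex_contains_segment subsetD)
  then have "d\<^sup>2 \<le> (dist a (midpoint u v))\<^sup>2"
    by (intro power_mono nearest \<open>0 \<le> d\<close>)
  moreover have "(dist a u)\<^sup>2 \<le> r\<^sup>2" "(dist a v)\<^sup>2 \<le> r\<^sup>2"
    using assms(4,5) by (simp_all add: power_mono)
  ultimately show ?thesis
    using parallelogram_law_midpoint[of u v a] by linarith
qed

lemma nearest_point_exists:
  fixes S :: "'a::{real_inner,complete_space} set"
  assumes "closed S" "convex S" "S \<noteq> {}"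
  shows "\<exists>u\<in>S. \<forall>y\<in>S. dist a u \<le> dist a y"
proof -
  define d where "d = infdist a S"
  define r where "r n = d + inverse (real (Suc n))" for n
  have "\<exists>w\<in>S. dist a w < r n" for n
    using \<open>S \<noteq> {}\<close> cInf_lessD[of "dist a ` S" "r n"]
    by (auto simp: r_def d_def infdist_notempty)
  then obtain w where w: "\<And>n. w n \<in> S" "\<And>n. dist a (w n) < r n"
    by metis
  have d_le: "d \<le> dist a y" if "y \<in> S" for y
    unfolding d_def using that by (rule infdist_le)
  have r_lim: "r \<longlonglongrightarrow> d"
    unfolding r_def by (rule LIMSEQ_inverse_real_of_nat_add)
  have "Cauchy w"
  proof (rule Cauchy_if_dist_le_tendsto_zero)
    show "dist (w m) (w n) \<le> sqrt (4 * (r m)\<^sup>2 - 4 * d\<^sup>2)" if "m \<le> n" for m n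
    proof (intro real_le_rsqrt dist_sq_le_if_near_nearest[OF \<open>convex S\<close> w(1) w(1)])
      have "r n \<le> r m"
        unfolding r_def using \<open>m \<le> n\<close> by (simp add: le_imp_inverse_le)
      then show "dist a (w m) \<le> r m" "dist a (w n) \<le> r m"
        using w(2)[of m] w(2)[of n] by linarith+
    qed (simp_all add: d_def infdist_nonneg infdist_le)
    have "(\<lambda>m. sqrt (4 * (r m)\<^sup>2 - 4 * d\<^sup>2)) \<longlonglongrightarrow> sqrt (4 * d\<^sup>2 - 4 * d\<^sup>2)"
      by (intro tendsto_intros r_lim)
    then show "(\<lambda>m. sqrt (4 * (r m)\<^sup>2 - 4 * d\<^sup>2)) \<longlonglongrightarrow> 0"
      by simp
  qed
  then obtain u where u: "w \<longlonglongrightarrow> u"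
    using Cauchy_convergent_iff convergent_def by blast
  have "u \<in> S"
    using \<open>closed S\<close> w(1) u by (rule closed_sequentially)
  moreover have "dist a u \<le> d"
    using LIMSEQ_le[OF tendsto_dist[OF tendsto_const u] r_lim] w(2) less_imp_le by blast
  ultimately show ?thesis
    using d_le by force
qed

context
  fixes S :: "'a::{real_inner,complete_space} set"
  assumes closed: "closed S" and convex: "convex S" and nonempty: "S \<noteq> {}"
begin

lemma metric_projection_nearest:
  "metric_projection S a \<in> S \<and> (\<forall>y\<in>S. dist a (metric_projection S a) \<le> dist a y)"
  unfolding metric_projection_def
  by (rule someI_ex) (use nearest_point_exists[OF closed convex nonempty] in blast)

lemma metric_projection_in: "metric_projection S a \<in> S"
  and metric_projection_le: "y \<in> S \<Longrightarrow> dist a (metric_projection S a) \<le> dist a y"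
  using metric_projection_nearest by auto

lemma dist_metric_projection: "dist a (metric_projection S a) = infdist a S"
proof (rule antisym)
  show "dist a (metric_projection S a) \<le> infdist a S"
    using nonempty metric_projection_le by (simp add: infdist_notempty cINF_greatest)
qed (rule infdist_le[OF metric_projection_in])

lemma metric_projection_Pythagoras:
  assumes "c \<in> S"
  shows "(dist (metric_projection S a) c)\<^sup>2 + (dist a (metric_projection S a))\<^sup>2 \<le> (dist a c)\<^sup>2"
proof -
  define u where "u = metric_projection S a"
  have "(a - u) \<bullet> (c - u) \<le> 0"
    unfolding u_def
    by (rule any_closest_point_dot[OF convex closed metric_projection_in assms])
      (use metric_projection_le in blast)
  moreover have "(dist a c)\<^sup>2 = (dist u c)\<^sup>2 + (dist a u)\<^sup>2 - 2 * ((a - u) \<bullet> (c - u))"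
    by (simp add: dist_norm power2_norm_eq_inner algebra_simps inner_commute)
  ultimately show ?thesis
    unfolding u_def by linarith
qed

end

lemma decreasing_closed_convex_nest:
  fixes D :: "nat \<Rightarrow> 'a::{real_inner,complete_space} set"
  assumes closed: "\<And>n. closed (D n)" and convex: "\<And>n. convex (D n)"
    and nonempty: "\<And>n. D n \<noteq> {}" and bounded: "bounded (D 0)"
    and decreasing: "\<And>n. D (Suc n) \<subseteq> D n"
  shows "\<exists>a. \<forall>n. a \<in> D n"
proof -
  define p where "p n = metric_projection (D n) 0" for n
  have p_in: "p m \<in> D n" if "n \<le> m" for m n
    using lift_Suc_antimono_le[of D, OF decreasing that]
      metric_projection_in[OF closed convex nonempty] by (auto simp: p_def)
  have sq: "(dist (p n) (p m))\<^sup>2 + (norm (p n))\<^sup>2 \<le> (norm (p m))\<^sup>2" if "n \<le> m" for m n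
    using metric_projection_Pythagoras[OF closed convex nonempty p_in[OF that], of 0]
    by (simp add: p_def)
  have incseq: "incseq (\<lambda>n. norm (p n))"
  proof (rule monoI)
    fix n m :: nat
    assume "n \<le> m"
    show "norm (p n) \<le> norm (p m)"
      using metric_projection_le[OF closed convex nonempty p_in[OF \<open>n \<le> m\<close>], of 0]
      by (simp add: p_def)
  qed
  obtain B where "\<forall>y\<in>D 0. norm y \<le> B"
    using bounded bounded_iff by blast
  then have "\<forall>n. norm (p n) \<le> B"
    using p_in by simp
  then obtain L where L: "(\<lambda>n. norm (p n)) \<longlonglongrightarrow> L" "\<And>n. norm (p n) \<le> L"
    using incseq_convergent[OF incseq] by blast
  have "Cauchy p"
  proof (rule Cauchy_if_dist_le_tendsto_zero)
    show "dist (p n) (p m) \<le> sqrt (L\<^sup>2 - (norm (p n))\<^sup>2)" if "n \<le> m" for m n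
      using sq[OF that] power_mono[OF L(2)[of m] norm_ge_zero, of 2]
      by (intro real_le_rsqrt) linarith
    have "(\<lambda>n. sqrt (L\<^sup>2 - (norm (p n))\<^sup>2)) \<longlonglongrightarrow> sqrt (L\<^sup>2 - L\<^sup>2)"
      by (intro tendsto_intros L(1))
    then show "(\<lambda>n. sqrt (L\<^sup>2 - (norm (p n))\<^sup>2)) \<longlonglongrightarrow> 0" by simp
  qed
  then obtain a where a: "p \<longlonglongrightarrow> a"
    using Cauchy_convergent_iff convergent_def by blast
  have "a \<in> D n" for n
    by (rule Lim_in_closed_set[OF closed _ _ a])
      (auto simp: eventually_sequentially intro: p_in)
  then show ?thesis by blast
qed

(* Contains every weak cluster point of z; it replaces weak sequential compactness. *)
definition tail_hull :: "(nat \<Rightarrow> 'a::real_normed_vector) \<Rightarrow> 'a set" where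
  "tail_hull z = (\<Inter>N. closure (convex hull (z ` {N..})))"

lemma tail_hull_nonempty:
  fixes z :: "nat \<Rightarrow> 'a::{real_inner,complete_space}"
  assumes "bounded (range z)"
  shows "tail_hull z \<noteq> {}"
proof -
  have "\<exists>q. \<forall>N. q \<in> closure (convex hull (z ` {N..}))"
  proof (rule decreasing_closed_convex_nest)
    show "bounded (closure (convex hull (z ` {0..})))"
      using assms by (simp add: bounded_closure bounded_convex_hull)
    show "closure (convex hull (z ` {Suc N..})) \<subseteq> closure (convex hull (z ` {N..}))" for N
      by (intro closure_mono hull_mono image_mono) auto
  qed (simp_all add: convex_closure)
  then show ?thesis
    by (auto simp: tail_hull_def)
qed

lemma tail_hull_subset:
  assumes "closed S" "convex S" "\<forall>\<^sub>F k in sequentially. z k \<in> S"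
  shows "tail_hull z \<subseteq> S"
proof -
  obtain N where "z ` {N..} \<subseteq> S"
    using assms(3) by (auto simp: eventually_sequentially)
  then have "closure (convex hull (z ` {N..})) \<subseteq> S"
    using assms(1,2) by (simp add: closure_minimal hull_minimal)
  then show ?thesis
    unfolding tail_hull_def by blast
qed

lemma tail_hull_inner_ge:
  fixes z :: "nat \<Rightarrow> 'a::real_inner"
  assumes "\<forall>\<^sub>F k in sequentially. b \<le> z k \<bullet> v" "q \<in> tail_hull z"
  shows "b \<le> q \<bullet> v"
proof -
  have "tail_hull z \<subseteq> {w. b \<le> v \<bullet> w}"
    by (rule tail_hull_subset[OF closed_halfspace_ge convex_halfspace_ge])
      (use assms(1) in \<open>simp add: inner_commute\<close>)
  then show ?thesis
    using assms(2) by (auto simp: inner_commute)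
qed

lemma inner_tail_hull:
  fixes z :: "nat \<Rightarrow> 'a::real_inner"
  assumes "(\<lambda>k. z k \<bullet> v) \<longlonglongrightarrow> L" "q \<in> tail_hull z"
  shows "q \<bullet> v = L"
proof (rule antisym)
  show "q \<bullet> v \<le> L"
  proof (rule dense_ge)
    fix u assume "L < u"
    then have "\<forall>\<^sub>F k in sequentially. z k \<bullet> v < u"
      using assms(1) by (simp add: order_tendsto_iff)
    then have "\<forall>\<^sub>F k in sequentially. - u \<le> z k \<bullet> - v"
      by eventually_elim simp
    then show "q \<bullet> v \<le> u"
      using tail_hull_inner_ge[OF _ assms(2)] by fastforce
  qed
  show "L \<le> q \<bullet> v"
  proof (rule dense_le)
    fix l assume "l < L"
    then have "\<forall>\<^sub>F k in sequentially. l < z k \<bullet> v"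
      using assms(1) by (simp add: order_tendsto_iff)
    then have "\<forall>\<^sub>F k in sequentially. l \<le> z k \<bullet> v"
      by eventually_elim simp
    then show "l \<le> q \<bullet> v"
      using tail_hull_inner_ge[OF _ assms(2)] by blast
  qed
qed

lemma convex_infdist_le:
  fixes A :: "'a::{real_inner,complete_space} set"
  assumes "closed A" "convex A" "A \<noteq> {}"
  shows "convex {z. infdist z A \<le> r}"
proof (rule convexI)
  fix z w and u v :: real
  assume z: "z \<in> {z. infdist z A \<le> r}" and w: "w \<in> {z. infdist z A \<le> r}"
    and uv: "0 \<le> u" "0 \<le> v" "u + v = 1"
  define P where "P = metric_projection A"
  have "u *\<^sub>R P z + v *\<^sub>R P w \<in> A"
    using convexD[OF assms(2) metric_projection_in metric_projection_in uv] assms by (simp add: P_def)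
  then have "infdist (u *\<^sub>R z + v *\<^sub>R w) A \<le> norm (u *\<^sub>R (z - P z) + v *\<^sub>R (w - P w))"
    using infdist_le by (fastforce simp: dist_norm algebra_simps)
  also have "\<dots> \<le> u * dist z (P z) + v * dist w (P w)"
    using norm_triangle_ineq[of "u *\<^sub>R (z - P z)" "v *\<^sub>R (w - P w)"] uv by (simp add: dist_norm)
  also have "\<dots> \<le> u * r + v * r"
    using z w uv dist_metric_projection[OF assms] by (intro add_mono mult_left_mono) (auto simp: P_def)
  finally show "u *\<^sub>R z + v *\<^sub>R w \<in> {z. infdist z A \<le> r}"
    using uv by (simp add: distrib_right[symmetric])
qed

lemma tail_hull_subset_if_infdist_tendsto_zero:
  fixes A :: "'a::{real_inner,complete_space} set"
  assumes "closed A" "convex A" "A \<noteq> {}" "(\<lambda>k. infdist (z k) A) \<longlonglongrightarrow> 0"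
  shows "tail_hull z \<subseteq> A"
proof
  fix q assume q: "q \<in> tail_hull z"
  have "infdist q A \<le> \<eta>" if "0 < \<eta>" for \<eta>
  proof -
    have "\<forall>\<^sub>F k in sequentially. infdist (z k) A < \<eta>"
      using assms(4) that by (simp add: order_tendsto_iff)
    then have "\<forall>\<^sub>F k in sequentially. z k \<in> {z. infdist z A \<le> \<eta>}"
      by eventually_elim simp
    then have "tail_hull z \<subseteq> {z. infdist z A \<le> \<eta>}"
      by (intro tail_hull_subset convex_infdist_le assms(1-3) closed_Collect_le
          continuous_on_infdist continuous_on_id continuous_on_const)
    then show ?thesis using q by blast
  qed
  then have "infdist q A = 0"
    by (meson dense_ge infdist_nonneg order_antisym)
  then show "q \<in> A"
    using in_closed_iff_infdist_zero[OF assms(1,3)] by blast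
qed

lemma convergent_inner_if_convergent_dist:
  fixes x :: "nat \<Rightarrow> 'a::real_inner"
  assumes "convergent (\<lambda>n. dist (x n) p)" "convergent (\<lambda>n. dist (x n) q)"
  shows "convergent (\<lambda>n. x n \<bullet> (q - p))"
proof -
  obtain a b where "(\<lambda>n. dist (x n) p) \<longlonglongrightarrow> a" "(\<lambda>n. dist (x n) q) \<longlonglongrightarrow> b"
    using assms by (auto simp: convergent_def)
  then have "(\<lambda>n. ((dist (x n) p)\<^sup>2 - (dist (x n) q)\<^sup>2 + (norm q)\<^sup>2 - (norm p)\<^sup>2) / 2)
      \<longlonglongrightarrow> (a\<^sup>2 - b\<^sup>2 + (norm q)\<^sup>2 - (norm p)\<^sup>2) / 2"
    by (intro tendsto_intros) simp_all
  moreover have "((dist (x n) p)\<^sup>2 - (dist (x n) q)\<^sup>2 + (norm q)\<^sup>2 - (norm p)\<^sup>2) / 2 = x n \<bullet> (q - p)" for n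
    by (simp add: dist_norm power2_norm_eq_inner inner_diff_left inner_diff_right inner_commute field_simps)
  ultimately show ?thesis
    by (auto simp: convergent_def)
qed

lemma Opial_weakly_converges:
  fixes x :: "nat \<Rightarrow> 'a::{real_inner,complete_space}"
  assumes bounded: "bounded (range x)"
    and dist_convergent: "\<And>c. c \<in> F \<Longrightarrow> convergent (\<lambda>n. dist (x n) c)"
    and cluster: "\<And>\<sigma>. strict_mono \<sigma> \<Longrightarrow> tail_hull (x \<circ> \<sigma>) \<subseteq> F"
  shows "\<exists>p\<in>F. weakly_converges x p"
proof -
  obtain p where p: "p \<in> tail_hull x"
    using tail_hull_nonempty[OF bounded] by blast
  have pF: "p \<in> F"
    using cluster[of id] p by (auto simp: strict_mono_def)
  have eventually_less: "\<forall>\<^sub>F n in sequentially. x n \<bullet> y < p \<bullet> y + \<epsilon>" if "0 < \<epsilon>" for y \<epsilon>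
  proof (rule ccontr)
    (* A subsequence staying \<epsilon> above p in direction y has a cluster point q in F;
       pairing with q - p forces q = p. *)
    assume "\<not> ?thesis"
    then have "\<exists>\<^sub>F n in sequentially. p \<bullet> y + \<epsilon> \<le> x n \<bullet> y"
      by (simp add: not_eventually not_less)
    then have "infinite {n. p \<bullet> y + \<epsilon> \<le> x n \<bullet> y}"
      by (simp add: cofinite_eq_sequentially[symmetric] frequently_cofinite)
    then obtain \<sigma> :: "nat \<Rightarrow> nat" where \<sigma>: "strict_mono \<sigma>" "\<And>k. p \<bullet> y + \<epsilon> \<le> x (\<sigma> k) \<bullet> y"
      using infinite_enumerate by blast
    have "bounded (range (x \<circ> \<sigma>))"
      using bounded by (rule bounded_subset) auto
    then obtain q where q: "q \<in> tail_hull (x \<circ> \<sigma>)"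
      using tail_hull_nonempty by blast
    have qF: "q \<in> F"
      using cluster[OF \<sigma>(1)] q by blast
    obtain L where L: "(\<lambda>n. x n \<bullet> (q - p)) \<longlonglongrightarrow> L"
      using convergent_inner_if_convergent_dist[OF dist_convergent[OF pF] dist_convergent[OF qF]]
      by (auto simp: convergent_def)
    have "q \<bullet> (q - p) = L"
      using LIMSEQ_subseq_LIMSEQ[OF L \<sigma>(1)] q by (intro inner_tail_hull) (simp_all add: o_def)
    moreover have "p \<bullet> (q - p) = L"
      using L p by (rule inner_tail_hull)
    ultimately have "(q - p) \<bullet> (q - p) = 0"
      by (simp add: inner_diff_left)
    then have "q = p"
      by simp
    moreover have "p \<bullet> y + \<epsilon> \<le> q \<bullet> y"
      using \<sigma>(2) q by (intro tail_hull_inner_ge) simp_all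
    ultimately show False
      using that by simp
  qed
  have "(\<lambda>n. x n \<bullet> y) \<longlonglongrightarrow> p \<bullet> y" for y
  proof (unfold order_tendsto_iff, intro conjI allI impI)
    fix l assume "l < p \<bullet> y"
    then have "\<forall>\<^sub>F n in sequentially. x n \<bullet> - y < p \<bullet> - y + (p \<bullet> y - l)"
      by (intro eventually_less) simp
    then show "\<forall>\<^sub>F n in sequentially. l < x n \<bullet> y"
      by eventually_elim simp
  next
    fix u assume "p \<bullet> y < u"
    then have "\<forall>\<^sub>F n in sequentially. x n \<bullet> y < p \<bullet> y + (u - p \<bullet> y)"
      by (intro eventually_less) simp
    then show "\<forall>\<^sub>F n in sequentially. x n \<bullet> y < u"
      by simp
  qed
  then show ?thesis
    using pF unfolding weakly_converges_def by blast
qed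

lemma
  fixes x :: "nat \<Rightarrow> 'a::metric_space"
  assumes step: "\<And>n. (dist (x (Suc n)) c)\<^sup>2 + (dist (x n) (x (Suc n)))\<^sup>2 \<le> (dist (x n) c)\<^sup>2"
  shows Fejer_bounded: "bounded (range x)"
    and Fejer_convergent: "convergent (\<lambda>n. dist (x n) c)"
    and Fejer_steps_tendsto_zero: "(\<lambda>n. dist (x n) (x (Suc n))) \<longlonglongrightarrow> 0"
proof -
  have dec: "decseq (\<lambda>n. dist (x n) c)"
  proof (rule decseq_SucI)
    show "dist (x (Suc n)) c \<le> dist (x n) c" for n
    proof (rule power2_le_imp_le)
      show "(dist (x (Suc n)) c)\<^sup>2 \<le> (dist (x n) c)\<^sup>2"
        using step[of n] zero_le_power2[of "dist (x n) (x (Suc n))"] by linarith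
    qed simp
  qed
  then have "range x \<subseteq> cball c (dist (x 0) c)"
    by (auto simp: decseq_def dist_commute)
  then show "bounded (range x)"
    using bounded_cball bounded_subset by blast
  obtain L where L: "(\<lambda>n. dist (x n) c) \<longlonglongrightarrow> L"
    using decseq_convergent[OF dec, of 0] by (metis zero_le_dist)
  then show "convergent (\<lambda>n. dist (x n) c)"
    by (auto simp: convergent_def)
  have "(\<lambda>n. (dist (x n) c)\<^sup>2 - (dist (x (Suc n)) c)\<^sup>2) \<longlonglongrightarrow> L\<^sup>2 - L\<^sup>2"
    by (intro tendsto_intros L LIMSEQ_Suc[OF L])
  then have diff: "(\<lambda>n. (dist (x n) c)\<^sup>2 - (dist (x (Suc n)) c)\<^sup>2) \<longlonglongrightarrow> 0"
    by simp
  have "(\<lambda>n. (dist (x n) (x (Suc n)))\<^sup>2) \<longlonglongrightarrow> 0"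
  proof (rule tendsto_sandwich[OF _ _ tendsto_const diff])
    show "\<forall>\<^sub>F n in sequentially. (dist (x n) (x (Suc n)))\<^sup>2 \<le> (dist (x n) c)\<^sup>2 - (dist (x (Suc n)) c)\<^sup>2"
      using step by (simp add: algebra_simps)
  qed simp
  then show "(\<lambda>n. dist (x n) (x (Suc n))) \<longlonglongrightarrow> 0"
    using tendsto_real_sqrt by fastforce
qed

lemma dist_le_sum_steps:
  fixes x :: "nat \<Rightarrow> 'a::metric_space"
  shows "dist (x n) (x (n + k)) \<le> (\<Sum>j<k. dist (x (n + j)) (x (Suc (n + j))))"
proof (induction k)
  case (Suc k)
  then show ?case
    using dist_triangle[of "x n" "x (n + Suc k)" "x (n + k)"] by simp
qed simp

lemma
  assumes "remote_projections \<Omega> C t \<alpha> x"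
  shows remote_projections_index: "\<alpha> n \<in> \<Omega>"
    and remote_projections_remote:
      "t n * (SUP \<beta>\<in>\<Omega>. infdist (x n) (C \<beta>)) \<le> infdist (x n) (C (\<alpha> n))"
    and remote_projections_Suc: "x (Suc n) = metric_projection (C (\<alpha> n)) (x n)"
  using assms by (auto simp: remote_projections_def)

context
  fixes \<Omega> :: "'i set" and C :: "'i \<Rightarrow> 'a::{real_inner,complete_space} set"
    and t :: "nat \<Rightarrow> real" and \<alpha> :: "nat \<Rightarrow> 'i" and x :: "nat \<Rightarrow> 'a" and c :: 'a
  assumes seq: "remote_projections \<Omega> C t \<alpha> x"
    and closed: "\<And>a. a \<in> \<Omega> \<Longrightarrow> closed (C a)"
    and convex: "\<And>a. a \<in> \<Omega> \<Longrightarrow> convex (C a)"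
    and c: "c \<in> (\<Inter>a\<in>\<Omega>. C a)"
begin

lemma
  shows remote_projections_dist_Suc: "dist (x n) (x (Suc n)) = infdist (x n) (C (\<alpha> n))"
    and remote_projections_Fejer:
      "(dist (x (Suc n)) c)\<^sup>2 + (dist (x n) (x (Suc n)))\<^sup>2 \<le> (dist (x n) c)\<^sup>2"
proof -
  have S: "closed (C (\<alpha> n))" "convex (C (\<alpha> n))" "C (\<alpha> n) \<noteq> {}" "c \<in> C (\<alpha> n)"
    using c remote_projections_index[OF seq] closed convex by auto
  show "dist (x n) (x (Suc n)) = infdist (x n) (C (\<alpha> n))"
    unfolding remote_projections_Suc[OF seq] by (rule dist_metric_projection[OF S(1-3)])
  show "(dist (x (Suc n)) c)\<^sup>2 + (dist (x n) (x (Suc n)))\<^sup>2 \<le> (dist (x n) c)\<^sup>2"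
    unfolding remote_projections_Suc[OF seq] by (rule metric_projection_Pythagoras[OF S])
qed

lemma remote_projections_infdist_le:
  assumes "0 \<le> t n" "\<beta> \<in> \<Omega>"
  shows "t n * infdist (x n) (C \<beta>) \<le> dist (x n) (x (Suc n))"
proof -
  have "bdd_above ((\<lambda>\<gamma>. infdist (x n) (C \<gamma>)) ` \<Omega>)"
    using c by (intro bdd_aboveI2[of _ _ "dist (x n) c"] infdist_le) auto
  then have "infdist (x n) (C \<beta>) \<le> (SUP \<gamma>\<in>\<Omega>. infdist (x n) (C \<gamma>))"
    using assms(2) by (rule cSUP_upper2) simp
  then show ?thesis
    using mult_left_mono[OF _ assms(1)] remote_projections_remote[OF seq, of n] remote_projections_dist_Suc[of n]
    by fastforce
qed

lemma remote_projections_infdist_tendsto_zero: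
  assumes recurrent: "\<And>n. \<exists>k\<le>K. t (n + k) > \<delta>" and "0 < \<delta>" and "\<beta> \<in> \<Omega>"
  shows "(\<lambda>n. infdist (x n) (C \<beta>)) \<longlonglongrightarrow> 0"
proof -
  define e where "e n = dist (x n) (x (Suc n))" for n
  define E where "E n = (\<Sum>j\<le>K. e (n + j))" for n
  have steps: "(\<lambda>n. dist (x n) (x (Suc n))) \<longlonglongrightarrow> 0"
    using remote_projections_Fejer by (rule Fejer_steps_tendsto_zero)
  have "E \<longlonglongrightarrow> (\<Sum>j\<le>K. 0)"
    unfolding E_def e_def by (intro tendsto_sum LIMSEQ_ignore_initial_segment steps)
  then have lim: "(\<lambda>n. (1 / \<delta> + 1) * E n) \<longlonglongrightarrow> 0"
    using tendsto_mult_right_zero by fastforce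
  have bound: "infdist (x n) (C \<beta>) \<le> (1 / \<delta> + 1) * E n" for n
  proof -
    obtain k where k: "k \<le> K" "\<delta> < t (n + k)"
      using recurrent by blast
    have "\<delta> * infdist (x (n + k)) (C \<beta>) \<le> t (n + k) * infdist (x (n + k)) (C \<beta>)"
      using k(2) by (intro mult_right_mono infdist_nonneg) simp
    also have "\<dots> \<le> e (n + k)"
      unfolding e_def using k(2) \<open>0 < \<delta>\<close> \<open>\<beta> \<in> \<Omega>\<close> by (intro remote_projections_infdist_le) simp_all
    also have "\<dots> \<le> E n"
      unfolding E_def e_def using k(1) by (intro member_le_sum) auto
    finally have far: "infdist (x (n + k)) (C \<beta>) \<le> E n / \<delta>"
      using \<open>0 < \<delta>\<close> by (simp add: field_simps)
    have "dist (x n) (x (n + k)) \<le> (\<Sum>j<k. e (n + j))"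
      unfolding e_def by (rule dist_le_sum_steps)
    also have "\<dots> \<le> E n"
      unfolding E_def e_def using k(1) by (intro sum_mono2) auto
    finally have "dist (x n) (x (n + k)) \<le> E n" .
    then show ?thesis
      using infdist_triangle[of "x n" "C \<beta>" "x (n + k)"] far by (simp add: algebra_simps)
  qed
  show ?thesis
    by (rule tendsto_sandwich[OF _ _ tendsto_const lim]) (simp_all add: infdist_nonneg bound)
qed

end

theorem theorem2:
  fixes \<Omega> :: "'i set"
    and C :: "'i \<Rightarrow> 'a::{real_inner,complete_space} set"
    and t :: "nat \<Rightarrow> real"
    and \<alpha> :: "nat \<Rightarrow> 'i"
    and x :: "nat \<Rightarrow> 'a"
  assumes two: "\<exists>a\<in>\<Omega>. \<exists>b\<in>\<Omega>. a \<noteq> b"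
    and closed: "\<And>a. a \<in> \<Omega> \<Longrightarrow> closed (C a)"
    and convex: "\<And>a. a \<in> \<Omega> \<Longrightarrow> convex (C a)"
    and nonempty: "(\<Inter>a\<in>\<Omega>. C a) \<noteq> {}"
    and t_range: "\<And>n. 0 \<le> t n \<and> t n \<le> 1"
    and t_recurrent: "\<exists>\<delta>>0. \<exists>K::nat. \<forall>n. \<exists>k\<le>K. t (n + k) > \<delta>"
    and seq: "remote_projections \<Omega> C t \<alpha> x"
  shows "\<exists>p\<in>(\<Inter>a\<in>\<Omega>. C a). weakly_converges x p"
proof (rule Opial_weakly_converges)
  obtain c where c: "c \<in> (\<Inter>a\<in>\<Omega>. C a)"
    using nonempty by blast
  obtain \<delta> K where "0 < \<delta>" and recurrent: "\<And>n. \<exists>k\<le>K. t (n + k) > \<delta>"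
    using t_recurrent by blast
  have Fejer: "(dist (x (Suc n)) c')\<^sup>2 + (dist (x n) (x (Suc n)))\<^sup>2 \<le> (dist (x n) c')\<^sup>2"
    if "c' \<in> (\<Inter>a\<in>\<Omega>. C a)" for c' n
    using seq closed convex that by (rule remote_projections_Fejer)
  show "convergent (\<lambda>n. dist (x n) c')" if "c' \<in> (\<Inter>a\<in>\<Omega>. C a)" for c'
    using Fejer[OF that] by (rule Fejer_convergent)
  show "bounded (range x)"
    using Fejer[OF c] by (rule Fejer_bounded)
  show "tail_hull (x \<circ> \<sigma>) \<subseteq> (\<Inter>a\<in>\<Omega>. C a)" if "strict_mono \<sigma>" for \<sigma>
  proof (intro INT_greatest tail_hull_subset_if_infdist_tendsto_zero closed convex)
    fix \<beta> assume "\<beta> \<in> \<Omega>"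
    then show "C \<beta> \<noteq> {}"
      using c by blast
    have "(\<lambda>n. infdist (x n) (C \<beta>)) \<longlonglongrightarrow> 0"
      using seq closed convex c recurrent \<open>0 < \<delta>\<close> \<open>\<beta> \<in> \<Omega>\<close>
      by (rule remote_projections_infdist_tendsto_zero)
    then show "(\<lambda>k. infdist ((x \<circ> \<sigma>) k) (C \<beta>)) \<longlonglongrightarrow> 0"
      using LIMSEQ_subseq_LIMSEQ[OF _ that] by (simp add: o_def)
  qed
qed

end
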